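(* Let $T=\begin{pmatrix}a&b\\c&d\end{pmatrix}$ be $J$-unitary and $z\in{\mathbb S}^1$. Then $$Q_z(T)=\begin{pmatrix}(a^* )^{-1}&0\\0&d^{-1}\end{pmatrix}^*\begin{pmatrix}-{\bf 1}&-z\,b\\-\overline z\,b^*&{\bf 1}\end{pmatrix}\begin{pmatrix}(a^* )^{-1}&0\\0&d^{-1}\end{pmatrix}=\begin{pmatrix}-(a^*a)^{-1}&-z\,a^{-1}bd^{-1}\\-(z\,a^{-1}bd^{-1})^*&(dd^* )^{-1}\end{pmatrix}.$$ Moreover $0\notin\sigma(Q_z(T))$.
   Context: ${\cal H}$ is a separable complex Hilbert space, ${\cal K}={\cal H}\oplus{\cal H}$, $J=\begin{pmatrix}{\bf 1}&0\\0&-{\bf 1}\end{pmatrix}$, ${\mathbb S}^1$ the unit circle. A bounded invertible $T$ on ${\cal K}$ is $J$-unitary if $T^*JT=J$ (blocks $a,d$ are then invertible). For $w\in{\mathbb S}^1$ the operator $wT$ is also $J$-unitary, and one sets $V(\overline w\,T)=\begin{pmatrix}\overline w(a^* )^{-1}&bd^{-1}\\-d^{-1}c&w\,d^{-1}\end{pmatrix}$ (a unitary). For $z=e^{\imath s}\in{\mathbb S}^1$ define the self-adjoint operator $$Q_z(T)=\frac1\imath\,V(e^{-\imath t}T)^*\,\partial_tV(e^{-\imath t}T)\Big|_{t=s}.$$ *)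

theory Defs
  imports "HOL-Analysis.Analysis"
begin

text \<open>A complex Hilbert space is modelled as a real Hilbert space (real inner product,
complete) carrying a complex scalar multiplication compatible with the real one, such
that multiplication by the imaginary unit is orthogonal.  The complex inner product
is then recovered as cinner below (linear in the second argument).\<close>

class complex_hilbert = real_inner + complete_space +
  fixes scaleC :: "complex \<Rightarrow> 'a \<Rightarrow> 'a"
  assumes scaleC_add_right: "scaleC c (x + y) = scaleC c x + scaleC c y"
    and scaleC_add_left: "scaleC (c + d) x = scaleC c x + scaleC d x"
    and scaleC_scaleC: "scaleC c (scaleC d x) = scaleC (c * d) x"
    and scaleC_of_real: "scaleC (complex_of_real r) x = r *\<^sub>R x"
    and inner_scaleC_ii: "inner (scaleC \<i> x) (scaleC \<i> y) = inner x y"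

instantiation prod :: (complex_hilbert, complex_hilbert) complex_hilbert
begin
definition scaleC_prod :: "complex \<Rightarrow> 'a \<times> 'b \<Rightarrow> 'a \<times> 'b" where
  "scaleC_prod c p = (scaleC c (fst p), scaleC c (snd p))"
instance
  by standard (auto simp: scaleC_prod_def scaleC_add_right scaleC_add_left
      scaleC_scaleC scaleC_of_real inner_scaleC_ii prod_eq_iff)
end

definition cinner :: "'a::complex_hilbert \<Rightarrow> 'a \<Rightarrow> complex" where
  "cinner x y = Complex (inner x y) (inner x (scaleC \<i> y))"

text \<open>Bounded operators are library bounded (real-)linear maps that are complex linear.\<close>

definition is_cop :: "('a::complex_hilbert \<Rightarrow>\<^sub>L 'a) \<Rightarrow> bool" where
  "is_cop f \<longleftrightarrow> (\<forall>c x. blinfun_apply f (scaleC c x) = scaleC c (blinfun_apply f x))"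

definition cscaleL :: "complex \<Rightarrow> ('a::complex_hilbert \<Rightarrow>\<^sub>L 'a)" where
  "cscaleL c = Blinfun (\<lambda>x. scaleC c x)"

definition adj :: "('a::complex_hilbert \<Rightarrow>\<^sub>L 'a) \<Rightarrow> ('a \<Rightarrow>\<^sub>L 'a)" where
  "adj f = (THE g. \<forall>x y. cinner (blinfun_apply f x) y = cinner x (blinfun_apply g y))"

definition invertible_op :: "('a::complex_hilbert \<Rightarrow>\<^sub>L 'a) \<Rightarrow> bool" where
  "invertible_op f \<longleftrightarrow> (\<exists>g. g o\<^sub>L f = id_blinfun \<and> f o\<^sub>L g = id_blinfun)"

definition inv_op :: "('a::complex_hilbert \<Rightarrow>\<^sub>L 'a) \<Rightarrow> ('a \<Rightarrow>\<^sub>L 'a)" where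
  "inv_op f = (THE g. g o\<^sub>L f = id_blinfun \<and> f o\<^sub>L g = id_blinfun)"

definition op_spectrum :: "('a::complex_hilbert \<Rightarrow>\<^sub>L 'a) \<Rightarrow> complex set" where
  "op_spectrum f = {l. \<not> invertible_op (f - cscaleL l)}"

definition blk :: "('a::complex_hilbert \<Rightarrow>\<^sub>L 'a) \<Rightarrow> ('a \<Rightarrow>\<^sub>L 'a) \<Rightarrow> ('a \<Rightarrow>\<^sub>L 'a)
    \<Rightarrow> ('a \<Rightarrow>\<^sub>L 'a) \<Rightarrow> (('a \<times> 'a) \<Rightarrow>\<^sub>L ('a \<times> 'a))" where
  "blk a b c d = Blinfun (\<lambda>(x, y). (blinfun_apply a x + blinfun_apply b y,
                                     blinfun_apply c x + blinfun_apply d y))"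

definition inl_L :: "'a::complex_hilbert \<Rightarrow>\<^sub>L ('a \<times> 'a)" where
  "inl_L = Blinfun (\<lambda>x. (x, 0))"

definition inr_L :: "'a::complex_hilbert \<Rightarrow>\<^sub>L ('a \<times> 'a)" where
  "inr_L = Blinfun (\<lambda>y. (0, y))"

definition blk11 :: "(('a::complex_hilbert \<times> 'a) \<Rightarrow>\<^sub>L ('a \<times> 'a)) \<Rightarrow> ('a \<Rightarrow>\<^sub>L 'a)" where
  "blk11 T = fst_blinfun o\<^sub>L T o\<^sub>L inl_L"
definition blk12 :: "(('a::complex_hilbert \<times> 'a) \<Rightarrow>\<^sub>L ('a \<times> 'a)) \<Rightarrow> ('a \<Rightarrow>\<^sub>L 'a)" where
  "blk12 T = fst_blinfun o\<^sub>L T o\<^sub>L inr_L"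
definition blk21 :: "(('a::complex_hilbert \<times> 'a) \<Rightarrow>\<^sub>L ('a \<times> 'a)) \<Rightarrow> ('a \<Rightarrow>\<^sub>L 'a)" where
  "blk21 T = snd_blinfun o\<^sub>L T o\<^sub>L inl_L"
definition blk22 :: "(('a::complex_hilbert \<times> 'a) \<Rightarrow>\<^sub>L ('a \<times> 'a)) \<Rightarrow> ('a \<Rightarrow>\<^sub>L 'a)" where
  "blk22 T = snd_blinfun o\<^sub>L T o\<^sub>L inr_L"

definition Jop :: "('a::complex_hilbert \<times> 'a) \<Rightarrow>\<^sub>L ('a \<times> 'a)" where
  "Jop = blk id_blinfun 0 0 (- id_blinfun)"

definition J_unitary :: "(('a::complex_hilbert \<times> 'a) \<Rightarrow>\<^sub>L ('a \<times> 'a)) \<Rightarrow> bool" where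
  "J_unitary T \<longleftrightarrow> is_cop T \<and> invertible_op T \<and> adj T o\<^sub>L Jop o\<^sub>L T = Jop"

definition Vop :: "(('a::complex_hilbert \<times> 'a) \<Rightarrow>\<^sub>L ('a \<times> 'a)) \<Rightarrow> (('a \<times> 'a) \<Rightarrow>\<^sub>L ('a \<times> 'a))" where
  "Vop T = blk (inv_op (adj (blk11 T))) (blk12 T o\<^sub>L inv_op (blk22 T))
               (- (inv_op (blk22 T) o\<^sub>L blk21 T)) (inv_op (blk22 T))"

text \<open>Q_z(T) = (1/i) V(e^{-it}T)^* d/dt V(e^{-it}T) at t = s, where z = e^{is}
  (we take s = Arg z; the expression is 2pi-periodic in s).\<close>
definition Qop :: "complex \<Rightarrow> (('a::complex_hilbert \<times> 'a) \<Rightarrow>\<^sub>L ('a \<times> 'a)) \<Rightarrow> (('a \<times> 'a) \<Rightarrow>\<^sub>L ('a \<times> 'a))" where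
  "Qop z T = (let s = Arg z in
     cscaleL (1 / \<i>) o\<^sub>L
       (adj (Vop (cscaleL (cis (- s)) o\<^sub>L T)) o\<^sub>L
        vector_derivative (\<lambda>t. Vop (cscaleL (cis (- t)) o\<^sub>L T)) (at s)))"

end

theory Submission
  imports Defs
begin

text \<open>Write \<open>A = (a\<^sup>*)\<^sup>-\<^sup>1\<close> and \<open>D = d\<^sup>-\<^sup>1\<close>. Scaling \<open>T\<close> by \<open>w\<close> scales \<open>a\<close> and \<open>d\<close> by \<open>w\<close>
  but leaves \<open>b d\<^sup>-\<^sup>1\<close> and \<open>d\<^sup>-\<^sup>1 c\<close> unchanged, so
  \<open>V(e\<^sup>-\<^sup>i\<^sup>t T) = [e\<^sup>-\<^sup>i\<^sup>t A, b D; -D c, e\<^sup>i\<^sup>t D]\<close> and its \<open>t\<close>-derivative is block diagonal.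
  Multiplying out \<open>V\<^sup>* V'\<close> and using the relation \<open>c\<^sup>* (d\<^sup>*)\<^sup>-\<^sup>1 = a\<^sup>-\<^sup>1 b\<close>, a consequence of
  \<open>T J T\<^sup>* = J\<close>, gives both block forms of \<open>Q\<^sub>z(T)\<close>. The middle factor
  \<open>N = [-1, -z b; -z\<^sup>* b\<^sup>*, 1]\<close> satisfies \<open>N\<^sup>2 = diag(1 + b b\<^sup>*, 1 + b\<^sup>* b) = diag(a a\<^sup>*, d\<^sup>* d)\<close>,
  which is invertible, hence so are \<open>N\<close> and \<open>Q\<^sub>z(T)\<close>. Invertibility of \<open>a\<close> and \<open>d\<close> comes from
  \<open>a\<^sup>* a = 1 + c\<^sup>* c\<close> and \<open>a a\<^sup>* = 1 + b b\<^sup>*\<close> (and the analogues for \<open>d\<close>): both \<open>a\<close> and \<open>a\<^sup>*\<close>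
  are bounded below, which in a Hilbert space forces invertibility. Adjoints exist by
  the Riesz representation theorem, obtained from the minimal-norm point of a closed
  convex set.\<close>

lemma scaleC_one [simp]: "scaleC 1 (x::'a::complex_hilbert) = x"
  using scaleC_of_real[of 1 x] by simp

lemma scaleC_scaleR: "scaleC c (r *\<^sub>R (x::'a::complex_hilbert)) = r *\<^sub>R scaleC c x"
  by (metis scaleC_of_real scaleC_scaleC mult.commute)

lemma scaleC_ii_ii: "scaleC \<i> (scaleC \<i> (x::'a::complex_hilbert)) = - x"
proof -
  have "scaleC \<i> (scaleC \<i> x) = scaleC (complex_of_real (-1)) x"
    by (simp add: scaleC_scaleC)
  also have "\<dots> = - x"
    using scaleC_of_real[of "-1" x] by simp
  finally show ?thesis .
qed

lemma scaleC_Re_Im: "scaleC c (x::'a::complex_hilbert) = Re c *\<^sub>R x + Im c *\<^sub>R scaleC \<i> x"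
proof -
  have c: "c = complex_of_real (Re c) + complex_of_real (Im c) * \<i>"
    by (simp add: complex_eq_iff)
  have "scaleC c x = scaleC (complex_of_real (Re c)) x + scaleC (complex_of_real (Im c)) (scaleC \<i> x)"
    by (subst c) (simp add: scaleC_add_left scaleC_scaleC)
  then show ?thesis
    by (simp add: scaleC_of_real)
qed

lemma norm_scaleC_ii [simp]: "norm (scaleC \<i> (x::'a::complex_hilbert)) = norm x"
  by (simp add: norm_eq_sqrt_inner inner_scaleC_ii)

lemma inner_scaleC_ii_left: "inner (scaleC \<i> (x::'a::complex_hilbert)) y = - inner x (scaleC \<i> y)"
proof -
  have "inner (scaleC \<i> x) y = inner (scaleC \<i> (scaleC \<i> x)) (scaleC \<i> y)"
    by (simp add: inner_scaleC_ii)
  then show ?thesis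
    by (simp add: scaleC_ii_ii)
qed

lemma scaleC_zero_right [simp]: "scaleC c (0::'a::complex_hilbert) = 0"
  using scaleC_add_right[of c "0::'a" 0] by simp

lemma scaleC_minus_right: "scaleC c (- (x::'a::complex_hilbert)) = - scaleC c x"
  by (metis scaleC_add_right scaleC_zero_right add.right_inverse minus_unique)

lemma scaleC_zero_left [simp]: "scaleC 0 (x::'a::complex_hilbert) = 0"
  using scaleC_of_real[of 0 x] by simp

lemma scaleC_minus_left: "scaleC (- c) (x::'a::complex_hilbert) = - scaleC c x"
proof -
  have "scaleC (- c) x + scaleC c x = 0"
    using scaleC_add_left[of "- c" c x] by simp
  then show ?thesis
    by (simp add: eq_neg_iff_add_eq_0)
qed

lemma bounded_linear_scaleC: "bounded_linear (scaleC c :: 'a::complex_hilbert \<Rightarrow> 'a)"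
proof -
  have "bounded_linear (scaleC \<i> :: 'a \<Rightarrow> 'a)"
  proof (rule bounded_linear_intro[where K=1])
    fix x y :: 'a and r
    show "scaleC \<i> (x + y) = scaleC \<i> x + scaleC \<i> y" by (rule scaleC_add_right)
    show "scaleC \<i> (r *\<^sub>R x) = r *\<^sub>R scaleC \<i> x" by (rule scaleC_scaleR)
    show "norm (scaleC \<i> x) \<le> norm x * 1" by simp
  qed
  then have "bounded_linear (\<lambda>x::'a. Re c *\<^sub>R x + Im c *\<^sub>R scaleC \<i> x)"
    by (intro bounded_linear_add bounded_linear_scaleR_right
        bounded_linear_compose[OF bounded_linear_scaleR_right])
  moreover have "scaleC c = (\<lambda>x::'a. Re c *\<^sub>R x + Im c *\<^sub>R scaleC \<i> x)"
    by (rule ext, rule scaleC_Re_Im)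
  ultimately show ?thesis
    by (simp only:)
qed

lemma cscaleL_apply [simp]: "blinfun_apply (cscaleL c) x = scaleC c x"
  unfolding cscaleL_def by (simp add: bounded_linear_Blinfun_apply bounded_linear_scaleC)

lemma cscaleL_one [simp]: "cscaleL 1 = id_blinfun"
  by (rule blinfun_eqI) simp

lemma cscaleL_mult: "cscaleL c o\<^sub>L cscaleL d = cscaleL (c * d)"
  by (rule blinfun_eqI) (simp add: scaleC_scaleC)

lemma cscaleL_cis: "cscaleL (cis u) = cos u *\<^sub>R id_blinfun + sin u *\<^sub>R cscaleL \<i>"
  by (rule blinfun_eqI) (simp add: blinfun.add_left blinfun.scaleR_left scaleC_Re_Im[of "cis u"])

section \<open>Riesz representation and adjoints\<close>

lemma Cauchy_minimizing_sequence_convex: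
  fixes S :: "'a::real_inner set" and x :: "nat \<Rightarrow> 'a"
  assumes cv: "convex S" and xS: "\<And>n. x n \<in> S"
    and d0: "0 \<le> d" and lower: "\<And>q. q \<in> S \<Longrightarrow> d \<le> norm q"
    and xn: "\<And>n. norm (x n) < d + inverse (real (Suc n))"
  shows "Cauchy x"
proof (rule metric_CauchyI)
  fix e :: real assume e: "0 < e"
  \<comment> \<open>midpoints lie in \<open>S\<close>, so the parallelogram law forces \<open>x m\<close> and \<open>x n\<close> close together\<close>
  have mid: "2 * d \<le> norm (x n + x m)" for n m
  proof -
    have "(1/2) *\<^sub>R x n + (1/2) *\<^sub>R x m \<in> S"
      using convexD[OF cv xS[of n] xS[of m], of "1/2" "1/2"] by simp
    then have "d \<le> norm ((1/2) *\<^sub>R (x n + x m))" using lower by (simp add: scaleR_add_right)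
    then show ?thesis by simp
  qed
  obtain N :: nat where N: "(8 * d + 4) / e^2 < real N" using reals_Archimedean2 by blast
  have dN: "(8 * d + 4) * inverse (real (Suc N)) < e^2"
  proof -
    have "8 * d + 4 < e^2 * real (Suc N)" using N e
      by (simp add: field_simps) (smt (verit) mult_left_mono zero_le_power2 of_nat_0_le_iff)
    then show ?thesis by (simp add: field_simps)
  qed
  show "\<exists>M. \<forall>m\<ge>M. \<forall>n\<ge>M. dist (x m) (x n) < e"
  proof (intro exI allI impI)
    fix m n assume m: "N \<le> m" and n: "N \<le> n"
    define \<delta> where "\<delta> = inverse (real (Suc N))"
    have \<delta>0: "0 < \<delta>" and \<delta>1: "\<delta> \<le> 1" by (auto simp: \<delta>_def inverse_le_1_iff)
    have "inverse (real (Suc m)) \<le> \<delta>" "inverse (real (Suc n)) \<le> \<delta>"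
      using m n by (auto simp: \<delta>_def intro!: le_imp_inverse_le)
    then have "norm (x m) < d + \<delta>" "norm (x n) < d + \<delta>" using xn[of m] xn[of n] by linarith+
    then have a2: "norm (x m)^2 \<le> (d + \<delta>)^2" "norm (x n)^2 \<le> (d + \<delta>)^2"
      by (auto intro!: power_mono)
    have c2: "(2*d)^2 \<le> norm (x m + x n)^2" using power_mono[OF mid[of m n], of 2] d0 by simp
    have "norm (x m - x n)^2 = 2 * norm (x m)^2 + 2 * norm (x n)^2 - norm (x m + x n)^2"
      by (simp add: power2_norm_eq_inner inner_commute algebra_simps)
    also have "\<dots> \<le> 4 * (d + \<delta>)^2 - 4 * d^2"
      using a2 c2 by (simp add: power_mult_distrib)
    also have "\<dots> = (8 * d + 4 * \<delta>) * \<delta>" by (simp add: power2_eq_square algebra_simps)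
    also have "\<dots> \<le> (8 * d + 4) * \<delta>" using \<delta>0 \<delta>1 d0 by (intro mult_right_mono) auto
    also have "\<dots> < e^2" using dN by (simp add: \<delta>_def)
    finally have "norm (x m - x n)^2 < e^2" .
    then have "norm (x m - x n) < e" using e by (smt (verit) power_mono norm_ge_zero)
    then show "dist (x m) (x n) < e" by (simp add: dist_norm)
  qed
qed

lemma exists_min_norm_closed_convex:
  fixes S :: "'a::{real_inner,complete_space} set"
  assumes cl: "closed S" and cv: "convex S" and ne: "S \<noteq> {}"
  shows "\<exists>p\<in>S. \<forall>q\<in>S. norm p \<le> norm q"
proof -
  define d where "d = Inf (norm ` S)"
  have bdd: "bdd_below (norm ` S)" by (rule bdd_belowI[of _ 0]) auto
  have lower: "\<And>q. q \<in> S \<Longrightarrow> d \<le> norm q" unfolding d_def by (rule cInf_lower) (use bdd in auto)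
  have "\<forall>n::nat. \<exists>x\<in>S. norm x < d + inverse (real (Suc n))"
  proof
    fix n :: nat
    have "Inf (norm ` S) < d + inverse (real (Suc n))" by (simp add: d_def)
    then obtain t where "t \<in> norm ` S" "t < d + inverse (real (Suc n))"
      using cInf_lessD[of "norm ` S"] ne by blast
    then show "\<exists>x\<in>S. norm x < d + inverse (real (Suc n))" by auto
  qed
  then obtain x where xS: "\<And>n. x n \<in> S" and xn: "\<And>n. norm (x n) < d + inverse (real (Suc n))"
    by metis
  have "0 \<le> d" unfolding d_def by (rule cInf_greatest) (use ne in auto)
  then have "Cauchy x" by (rule Cauchy_minimizing_sequence_convex[OF cv xS _ lower xn])
  then obtain p where p: "x \<longlonglongrightarrow> p" using Cauchy_convergent_iff convergent_def by blast
  have pS: "p \<in> S" using closed_sequentially[OF cl] xS p by blast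
  have "(\<lambda>n. norm (x n)) \<longlonglongrightarrow> d"
  proof (rule tendsto_sandwich[of "\<lambda>n. d" _ _ "\<lambda>n. d + inverse (real (Suc n))"])
    show "\<forall>\<^sub>F n in sequentially. d \<le> norm (x n)" using lower xS by auto
    show "\<forall>\<^sub>F n in sequentially. norm (x n) \<le> d + inverse (real (Suc n))"
      using xn by (intro always_eventually allI less_imp_le)
    show "(\<lambda>n. d + inverse (real (Suc n))) \<longlonglongrightarrow> d"
      using tendsto_add[OF tendsto_const[of d] LIMSEQ_inverse_real_of_nat] by simp
  qed simp
  then have "norm p = d" using LIMSEQ_unique[OF tendsto_norm[OF p]] by blast
  then show ?thesis using pS lower by auto
qed

lemma inner_eq_zero_if_norm_minimal:
  fixes p v :: "'a::real_inner"
  assumes min: "\<And>t::real. norm p \<le> norm (p + t *\<^sub>R v)"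
  shows "inner p v = 0"
proof (cases "v = 0")
  case False
  then have vv: "0 < inner v v" by simp
  define t where "t = - inner p v / inner v v"
  have "norm p ^2 \<le> norm (p + t *\<^sub>R v)^2" using min[of t] by (auto intro: power_mono)
  also have "norm (p + t *\<^sub>R v)^2 = inner p p + 2 * t * inner p v + t^2 * inner v v"
    unfolding power2_norm_eq_inner
    by (simp add: inner_commute algebra_simps power2_eq_square)
  finally have "0 \<le> 2 * t * inner p v + t^2 * inner v v" by (simp add: power2_norm_eq_inner)
  also have "2 * t * inner p v + t^2 * inner v v = - ((inner p v)^2 / inner v v)"
    using vv by (simp add: t_def field_simps power2_eq_square)
  finally have "(inner p v)^2 \<le> 0" using vv by (simp add: divide_le_0_iff)
  then show ?thesis by simp
qed simp

lemma inner_left_eqI: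
  fixes u w :: "'a::real_inner"
  assumes "\<And>x. inner u x = inner w x"
  shows "u = w"
proof -
  have "inner (u - w) (u - w) = 0" using assms by (simp add: inner_diff)
  then show ?thesis by simp
qed

lemma riesz_representation:
  fixes f :: "'a::{real_inner,complete_space} \<Rightarrow> real"
  assumes bl: "bounded_linear f"
  shows "\<exists>y. \<forall>x. f x = inner y x"
proof (cases "\<forall>x. f x = 0")
  case False
  then obtain x0 where x0: "f x0 \<noteq> 0" by blast
  interpret bounded_linear f by (rule bl)
  define S where "S = {x. f x = 1}"
  have ne: "S \<noteq> {}" using x0 by (auto simp: S_def scale intro!: exI[of _ "inverse (f x0) *\<^sub>R x0"])
  have cl: "closed S" unfolding S_def
    by (intro closed_Collect_eq continuous_on_const linear_continuous_on bl)
  have cv: "convex S" unfolding S_def convex_def by (auto simp: add scale algebra_simps)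
  obtain p where pS: "p \<in> S" and pmin: "\<And>q. q \<in> S \<Longrightarrow> norm p \<le> norm q"
    using exists_min_norm_closed_convex[OF cl cv ne] by blast
  have fp: "f p = 1" using pS by (simp add: S_def)
  \<comment> \<open>the minimal-norm point of the hyperplane \<open>f = 1\<close> is orthogonal to the kernel\<close>
  have orth: "inner p v = 0" if "f v = 0" for v
    by (rule inner_eq_zero_if_norm_minimal) (use that fp in \<open>auto intro!: pmin simp: S_def add scale\<close>)
  have pp: "0 < inner p p" using fp by (cases "p = 0") auto
  show ?thesis
  proof (intro exI allI)
    fix x
    have "inner p (x - f x *\<^sub>R p) = 0" by (rule orth) (simp add: diff scale fp)
    then have "inner p x = f x * inner p p" by (simp add: inner_diff_right)
    then show "f x = inner ((1 / inner p p) *\<^sub>R p) x" using pp by simp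
  qed
qed (intro exI[of _ 0], simp)

lemma real_adjoint_exists:
  fixes f :: "'a::{real_inner,complete_space} \<Rightarrow>\<^sub>L 'a"
  shows "\<exists>g::'a \<Rightarrow>\<^sub>L 'a. \<forall>x y. inner (f x) y = inner x (g y)"
proof -
  have "\<exists>w. \<forall>x. inner (f x) y = inner w x" for y
    by (rule riesz_representation)
      (use bounded_linear_compose[OF bounded_linear_inner_left[of y] blinfun.bounded_linear_right[of f]] in simp)
  then obtain G where G: "\<And>x y. inner (f x) y = inner (G y) x" by metis
  have G_add: "G (y1 + y2) = G y1 + G y2" for y1 y2
    by (rule inner_left_eqI) (simp add: G[symmetric] inner_add)
  have G_scale: "G (r *\<^sub>R y) = r *\<^sub>R G y" for r y
    by (rule inner_left_eqI) (simp add: G[symmetric])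
  have G_bound: "norm (G y) \<le> norm y * norm f" for y
  proof (cases "G y = 0")
    case False
    have "norm (G y)^2 = inner (f (G y)) y" by (simp add: G power2_norm_eq_inner)
    also have "\<dots> \<le> norm (f (G y)) * norm y" by (rule norm_cauchy_schwarz)
    also have "\<dots> \<le> norm f * norm (G y) * norm y" by (intro mult_right_mono norm_blinfun) auto
    finally have "norm (G y) * norm (G y) \<le> (norm f * norm y) * norm (G y)"
      by (simp add: power2_eq_square algebra_simps)
    then show ?thesis using False by (simp add: mult.commute)
  qed simp
  have bl: "bounded_linear G"
    by (rule bounded_linear_intro[of _ "norm f"]) (auto simp: G_add G_scale G_bound)
  show ?thesis
    by (intro exI[of _ "Blinfun G"])
      (simp add: bounded_linear_Blinfun_apply[OF bl], metis G inner_commute)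
qed

lemma is_cop_iff: "is_cop f \<longleftrightarrow> (\<forall>x. f (scaleC \<i> x) = scaleC \<i> (f x))"
proof
  assume "\<forall>x. f (scaleC \<i> x) = scaleC \<i> (f x)"
  then show "is_cop f"
    unfolding is_cop_def
    by (metis scaleC_Re_Im blinfun.add_right blinfun.scaleR_right)
qed (simp add: is_cop_def)

lemma cop_scaleC: "is_cop f \<Longrightarrow> f (scaleC c x) = scaleC c (f x)"
  by (simp add: is_cop_def)

lemma cop_id [simp]: "is_cop id_blinfun"
  by (simp add: is_cop_def)

lemma cop_zero [simp]: "is_cop 0"
  by (simp add: is_cop_def)

lemma cop_compose [simp]: "is_cop f \<Longrightarrow> is_cop g \<Longrightarrow> is_cop (f o\<^sub>L g)"
  by (simp add: is_cop_def)

lemma cop_minus [simp]: "is_cop f \<Longrightarrow> is_cop (- f)"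
  by (simp add: is_cop_def blinfun.minus_left scaleC_minus_right)

lemma cop_cscaleL [simp]: "is_cop (cscaleL c)"
  by (simp add: is_cop_def scaleC_scaleC mult.commute)

lemma cscaleL_commute: "is_cop f \<Longrightarrow> cscaleL c o\<^sub>L f = f o\<^sub>L cscaleL c"
  by (rule blinfun_eqI) (simp add: cop_scaleC)

lemma comp_id_left [simp]: "id_blinfun o\<^sub>L f = f"
  by (rule blinfun_eqI) simp

lemma comp_id_right [simp]: "f o\<^sub>L id_blinfun = f"
  by (rule blinfun_eqI) simp

lemma comp_add_left: "(f + g) o\<^sub>L h = (f o\<^sub>L h) + (g o\<^sub>L h)"
  by (rule blinfun_eqI) (simp add: blinfun.add_left)

lemma comp_diff_left: "(f - g) o\<^sub>L h = (f o\<^sub>L h) - (g o\<^sub>L h)"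
  by (rule blinfun_eqI) (simp add: blinfun.diff_left)

lemma comp_minus_left [simp]: "(- f) o\<^sub>L h = - (f o\<^sub>L h)"
  by (rule blinfun_eqI) (simp add: blinfun.minus_left)

lemma comp_minus_right [simp]: "h o\<^sub>L (- f) = - (h o\<^sub>L f)"
  by (rule blinfun_eqI) (simp add: blinfun.minus_left blinfun.minus_right)

lemma comp_scaleR_left: "(r *\<^sub>R f) o\<^sub>L h = r *\<^sub>R (f o\<^sub>L h)"
  by (rule blinfun_eqI) (simp add: blinfun.scaleR_left)

lemma comp_assoc: "(f o\<^sub>L g) o\<^sub>L h = f o\<^sub>L (g o\<^sub>L h)"
  by (rule blinfun_eqI) simp

text \<open>The adjoint of a complex-linear operator is its real Hilbert-space adjoint: the
  imaginary part of \<open>cinner\<close> is determined by the real part because \<open>scaleC \<i>\<close> is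
  orthogonal and commutes with the operator.\<close>

lemma adj_unique:
  fixes f g :: "'a::complex_hilbert \<Rightarrow>\<^sub>L 'a"
  assumes cop: "is_cop f" and adjoint: "\<And>x y. inner (f x) y = inner x (g y)"
  shows "adj f = g"
  unfolding adj_def
proof (rule the_equality)
  show "\<forall>x y. cinner (f x) y = cinner x (g y)"
  proof (intro allI)
    fix x y
    have "inner (f x) (scaleC \<i> y) = - inner (scaleC \<i> (f x)) y"
      by (simp add: inner_scaleC_ii_left)
    also have "\<dots> = - inner (scaleC \<i> x) (g y)"
      by (simp add: cop_scaleC[OF cop, symmetric] adjoint)
    also have "\<dots> = inner x (scaleC \<i> (g y))"
      by (simp add: inner_scaleC_ii_left)
    finally show "cinner (f x) y = cinner x (g y)"
      by (simp add: cinner_def adjoint)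
  qed
next
  fix g' :: "'a \<Rightarrow>\<^sub>L 'a"
  assume g': "\<forall>x y. cinner (f x) y = cinner x (g' y)"
  have real_parts: "inner x (g' y) = inner x (g y)" for x y
    using g'[rule_format, of x y] adjoint[of x y] by (simp add: cinner_def)
  show "g' = g"
  proof (rule blinfun_eqI, rule inner_left_eqI)
    fix y x
    show "inner (g' y) x = inner (g y) x"
      using real_parts[of x y] by (simp only: inner_commute)
  qed
qed

lemma adj_inner:
  fixes f :: "'a::complex_hilbert \<Rightarrow>\<^sub>L 'a"
  assumes cop: "is_cop f"
  shows "inner (f x) y = inner x (adj f y)"
proof -
  obtain g :: "'a \<Rightarrow>\<^sub>L 'a" where g: "\<And>x y. inner (f x) y = inner x (g y)"
    using real_adjoint_exists[of f] by blast
  then show ?thesis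
    using adj_unique[OF cop g] by simp
qed

lemma adj_inner_right: "is_cop f \<Longrightarrow> inner x (f y) = inner (adj f x) y"
  using adj_inner[of f y x] by (simp add: inner_commute)

lemma cop_adj [simp]:
  fixes f :: "'a::complex_hilbert \<Rightarrow>\<^sub>L 'a"
  assumes cop: "is_cop f"
  shows "is_cop (adj f)"
  unfolding is_cop_iff
proof
  fix y
  show "adj f (scaleC \<i> y) = scaleC \<i> (adj f y)"
  proof (rule inner_left_eqI, subst (1 2) inner_commute)
    fix x
    have "inner x (adj f (scaleC \<i> y)) = inner (f x) (scaleC \<i> y)"
      by (simp add: adj_inner[OF cop])
    also have "\<dots> = - inner (scaleC \<i> (f x)) y"
      by (simp add: inner_scaleC_ii_left)
    also have "\<dots> = - inner (scaleC \<i> x) (adj f y)"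
      by (simp add: cop_scaleC[OF cop, symmetric] adj_inner[OF cop])
    also have "\<dots> = inner x (scaleC \<i> (adj f y))"
      by (simp add: inner_scaleC_ii_left)
    finally show "inner x (adj f (scaleC \<i> y)) = inner x (scaleC \<i> (adj f y))" .
  qed
qed

lemma adj_cscaleL: "adj (cscaleL c :: 'a::complex_hilbert \<Rightarrow>\<^sub>L 'a) = cscaleL (cnj c)"
proof (rule adj_unique)
  fix x y :: 'a
  show "inner (cscaleL c x) y = inner x (cscaleL (cnj c) y)"
    by (simp add: scaleC_Re_Im[of c] scaleC_Re_Im[of "cnj c"] inner_add_left inner_add_right
        inner_diff_right inner_scaleC_ii_left)
qed simp

lemma adj_adj: "is_cop f \<Longrightarrow> adj (adj f) = f"
  by (rule adj_unique) (auto simp: adj_inner_right)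

lemma adj_compose: "is_cop f \<Longrightarrow> is_cop g \<Longrightarrow> adj (f o\<^sub>L g) = adj g o\<^sub>L adj f"
  by (rule adj_unique) (auto simp: adj_inner)

lemma adj_minus: "is_cop f \<Longrightarrow> adj (- f) = - adj f"
  by (rule adj_unique) (auto simp: adj_inner blinfun.minus_left)

lemma adj_zero [simp]: "adj (0 :: 'a::complex_hilbert \<Rightarrow>\<^sub>L 'a) = 0"
  by (rule adj_unique) auto

lemma adj_id [simp]: "adj (id_blinfun :: 'a::complex_hilbert \<Rightarrow>\<^sub>L 'a) = id_blinfun"
  by (rule adj_unique) auto

lemma inv_op_unique:
  assumes left: "g o\<^sub>L f = id_blinfun" and right: "f o\<^sub>L g = id_blinfun"
  shows "inv_op f = g"
  unfolding inv_op_def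
proof (rule the_equality)
  fix h assume h: "h o\<^sub>L f = id_blinfun \<and> f o\<^sub>L h = id_blinfun"
  have "h = h o\<^sub>L (f o\<^sub>L g)" using right by simp
  also have "\<dots> = g" using h by (simp add: comp_assoc[symmetric])
  finally show "h = g" .
qed (use assms in simp)

lemma invertibleI: "g o\<^sub>L f = id_blinfun \<Longrightarrow> f o\<^sub>L g = id_blinfun \<Longrightarrow> invertible_op f"
  unfolding invertible_op_def by blast

lemma invertible_op_lr:
  assumes left: "g o\<^sub>L f = id_blinfun" and right: "f o\<^sub>L h = id_blinfun"
  shows "invertible_op f"
proof -
  have "g = g o\<^sub>L (f o\<^sub>L h)" using right by simp
  also have "\<dots> = h" by (simp only: comp_assoc[symmetric] left comp_id_left)
  finally show ?thesis
    using assms by (intro invertibleI[of g]) simp_all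
qed

lemma inv_op_compose_left:
  assumes "invertible_op f" shows "inv_op f o\<^sub>L f = id_blinfun"
  using assms inv_op_unique unfolding invertible_op_def by metis

lemma inv_op_compose_right:
  assumes "invertible_op f" shows "f o\<^sub>L inv_op f = id_blinfun"
  using assms inv_op_unique unfolding invertible_op_def by metis

lemma inv_op_apply:
  assumes "invertible_op f"
  shows "inv_op f (f x) = x" "f (inv_op f x) = x"
  using inv_op_compose_left[OF assms] inv_op_compose_right[OF assms]
  by (metis blinfun_apply_blinfun_compose blinfun_apply_id_blinfun)+

lemma invertible_inv_op: "invertible_op f \<Longrightarrow> invertible_op (inv_op f)"
  using inv_op_compose_left inv_op_compose_right invertibleI by blast

lemma cop_inv_op:
  assumes inv: "invertible_op f" and cop: "is_cop f"
  shows "is_cop (inv_op f)"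
  unfolding is_cop_def
proof (intro allI)
  fix c x
  have "inv_op f (scaleC c x) = inv_op f (scaleC c (f (inv_op f x)))"
    by (simp add: inv_op_apply[OF inv])
  also have "\<dots> = scaleC c (inv_op f x)"
    by (subst cop_scaleC[OF cop, symmetric]) (simp only: inv_op_apply[OF inv])
  finally show "inv_op f (scaleC c x) = scaleC c (inv_op f x)" .
qed

lemma invertible_compose:
  assumes "invertible_op f" "invertible_op g"
  shows "invertible_op (f o\<^sub>L g)"
  using assms by (intro invertibleI[of "inv_op g o\<^sub>L inv_op f"]) (auto intro!: blinfun_eqI simp: inv_op_apply)

lemma inv_op_compose:
  assumes "invertible_op f" "invertible_op g"
  shows "inv_op (f o\<^sub>L g) = inv_op g o\<^sub>L inv_op f"
  using assms by (intro inv_op_unique) (auto intro!: blinfun_eqI simp: inv_op_apply)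

lemma invertible_adj:
  assumes "invertible_op f" "is_cop f"
  shows "invertible_op (adj f)"
  using assms
  by (intro invertibleI[of "adj (inv_op f)"])
     (simp_all add: adj_compose[symmetric] cop_inv_op inv_op_compose_left inv_op_compose_right)

lemma inv_op_adj:
  assumes "invertible_op f" "is_cop f"
  shows "inv_op (adj f) = adj (inv_op f)"
  using assms
  by (intro inv_op_unique)
     (simp_all add: adj_compose[symmetric] cop_inv_op inv_op_compose_left inv_op_compose_right)

lemma adj_inv_op_adj:
  assumes "invertible_op f" "is_cop f"
  shows "adj (inv_op (adj f)) = inv_op f"
  using assms by (simp add: inv_op_adj adj_adj cop_inv_op)

lemma invertible_cscaleL: "c \<noteq> 0 \<Longrightarrow> invertible_op (cscaleL c)"
  by (intro invertibleI[of "cscaleL (inverse c)"]) (simp_all add: cscaleL_mult)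

lemma inv_op_cscaleL: "c \<noteq> 0 \<Longrightarrow> inv_op (cscaleL c) = cscaleL (inverse c)"
  by (intro inv_op_unique) (simp_all add: cscaleL_mult)

lemma invertible_op_of_square:
  assumes "invertible_op (f o\<^sub>L f)"
  shows "invertible_op f"
proof (rule invertible_op_lr)
  show "(inv_op (f o\<^sub>L f) o\<^sub>L f) o\<^sub>L f = id_blinfun"
    using inv_op_compose_left[OF assms] by (simp add: comp_assoc)
  show "f o\<^sub>L (f o\<^sub>L inv_op (f o\<^sub>L f)) = id_blinfun"
    using inv_op_compose_right[OF assms] by (simp add: comp_assoc[symmetric])
qed

lemma closed_range_if_bounded_below:
  fixes f :: "'a::{real_normed_vector,complete_space} \<Rightarrow>\<^sub>L 'b::real_normed_vector"
  assumes below: "\<And>x. norm x \<le> norm (f x)"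
  shows "closed (range f)"
  unfolding closed_sequential_limits
proof (intro allI impI, elim conjE)
  fix s l assume "\<forall>n. s n \<in> range f" and sl: "s \<longlonglongrightarrow> l"
  then have "\<forall>n. \<exists>x. s n = f x" by blast
  then obtain x where x: "\<And>n. s n = f (x n)" by metis
  have "Cauchy x"
  proof (rule metric_CauchyI)
    fix e :: real assume "0 < e"
    then obtain M where M: "\<forall>m\<ge>M. \<forall>n\<ge>M. dist (s m) (s n) < e"
      using LIMSEQ_imp_Cauchy[OF sl] metric_CauchyD by blast
    have "dist (x m) (x n) \<le> dist (s m) (s n)" for m n
      using below[of "x m - x n"] by (simp add: x dist_norm blinfun.diff_right)
    then show "\<exists>M. \<forall>m\<ge>M. \<forall>n\<ge>M. dist (x m) (x n) < e" using M by (meson le_less_trans)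
  qed
  then obtain x0 where "x \<longlonglongrightarrow> x0" using Cauchy_convergent_iff convergent_def by blast
  then have "s \<longlonglongrightarrow> f x0"
    unfolding x[abs_def] by (intro blinfun.tendsto tendsto_const)
  then show "l \<in> range f" using sl LIMSEQ_unique by blast
qed

text \<open>The range is closed, and the point of \<open>range f - y\<close> of minimal norm is orthogonal to
  the range, hence lies in the kernel of the adjoint, hence is zero.\<close>

lemma invertible_if_bounded_below:
  fixes f :: "'a::complex_hilbert \<Rightarrow>\<^sub>L 'a"
  assumes cop: "is_cop f"
    and below: "\<And>x. norm x \<le> norm (f x)" and adj_below: "\<And>x. norm x \<le> norm (adj f x)"
  shows "invertible_op f"
proof -
  have inj: "f x = f y \<Longrightarrow> x = y" for x y
    using below[of "x - y"] by (simp add: blinfun.diff_right)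
  have surj: "\<exists>x. f x = y" for y
  proof -
    define S where "S = (\<lambda>v. v - y) ` range f"
    have "closed S" unfolding S_def
      using closed_translation[OF closed_range_if_bounded_below[OF below], of "- y"] by simp
    moreover have "convex S" unfolding S_def
      using convex_translation[OF convex_linear_image[OF _ convex_UNIV], of f "- y"]
      by (simp add: bounded_linear.linear[OF blinfun.bounded_linear_right])
    ultimately obtain w where wS: "w \<in> S" and wmin: "\<And>q. q \<in> S \<Longrightarrow> norm w \<le> norm q"
      using exists_min_norm_closed_convex[of S] by (auto simp: S_def)
    obtain x0 where w: "w = f x0 - y" using wS S_def by blast
    have "inner w (f v) = 0" for v
    proof (rule inner_eq_zero_if_norm_minimal)
      fix t :: real
      have "w + t *\<^sub>R f v = f (x0 + t *\<^sub>R v) - y"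
        by (simp add: w blinfun.add_right blinfun.scaleR_right)
      then show "norm w \<le> norm (w + t *\<^sub>R f v)"
        by (intro wmin) (simp add: S_def)
    qed
    then have "adj f w = 0" by (metis adj_inner_right[OF cop] inner_eq_zero_iff)
    then show ?thesis using adj_below[of w] w by auto
  qed
  define g where "g y = (THE x. f x = y)" for y
  have fg: "f (g y) = y" for y
    unfolding g_def by (rule theI') (use surj inj in blast)
  have gf: "g (f x) = x" for x
    using fg inj by blast
  have "bounded_linear g"
  proof (rule bounded_linear_intro[of _ 1])
    fix y1 y2 :: 'a and r :: real
    show "g (y1 + y2) = g y1 + g y2" by (rule inj) (simp add: fg blinfun.add_right)
    show "g (r *\<^sub>R y1) = r *\<^sub>R g y1" by (rule inj) (simp add: fg blinfun.scaleR_right)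
    show "norm (g y1) \<le> norm y1 * 1" using below[of "g y1"] by (simp add: fg)
  qed
  then show ?thesis
    by (intro invertibleI[of "Blinfun g"]) (auto intro!: blinfun_eqI simp: bounded_linear_Blinfun_apply fg gf)
qed

lemma norm_le_if_adj_compose_eq:
  fixes f p :: "'a::complex_hilbert \<Rightarrow>\<^sub>L 'a"
  assumes cf: "is_cop f" and cp: "is_cop p" and eq: "adj f o\<^sub>L f = id_blinfun + (adj p o\<^sub>L p)"
  shows "norm x \<le> norm (f x)"
proof -
  have "adj f (f x) = x + adj p (p x)"
    using eq by (metis blinfun.add_left blinfun_apply_blinfun_compose blinfun_apply_id_blinfun)
  then have "inner (f x) (f x) = inner x x + inner (p x) (p x)"
    by (simp add: adj_inner[OF cf] adj_inner[OF cp] inner_add_right)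
  then have "norm x ^2 \<le> norm (f x) ^2" by (simp add: power2_norm_eq_inner)
  then show ?thesis by (rule power2_le_imp_le) simp
qed

lemma invertible_if_adj_compose_eqs:
  fixes f p q :: "'a::complex_hilbert \<Rightarrow>\<^sub>L 'a"
  assumes cf: "is_cop f" and cp: "is_cop p" and cq: "is_cop q"
    and eq1: "adj f o\<^sub>L f = id_blinfun + (adj p o\<^sub>L p)"
    and eq2: "f o\<^sub>L adj f = id_blinfun + (q o\<^sub>L adj q)"
  shows "invertible_op f"
proof (rule invertible_if_bounded_below[OF cf])
  show "norm x \<le> norm (f x)" for x
    by (rule norm_le_if_adj_compose_eq[OF cf cp eq1])
  have "adj (adj f) o\<^sub>L adj f = id_blinfun + (adj (adj q) o\<^sub>L adj q)"
    using eq2 by (simp add: adj_adj cf cq)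
  then show "norm x \<le> norm (adj f x)" for x
    by (rule norm_le_if_adj_compose_eq[OF cop_adj[OF cf] cop_adj[OF cq]])
qed

section \<open>Block operators on \<open>H \<times> H\<close>\<close>

lemma bounded_linear_blk:
  fixes a b c d :: "'a::complex_hilbert \<Rightarrow>\<^sub>L 'a"
  shows "bounded_linear (\<lambda>(x, y). (a x + b y, c x + d y))"
proof -
  have "(\<lambda>(x, y). (a x + b y, c x + d y)) = (\<lambda>p. (a (fst p) + b (snd p), c (fst p) + d (snd p)))"
    by (auto simp: fun_eq_iff)
  then show ?thesis
    by (simp only:) (intro bounded_linear_Pair bounded_linear_add
        bounded_linear_compose[OF blinfun.bounded_linear_right bounded_linear_fst]
        bounded_linear_compose[OF blinfun.bounded_linear_right bounded_linear_snd])
qed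

lemma blk_apply [simp]: "blk a b c d (x, y) = (a x + b y, c x + d y)"
  unfolding blk_def by (simp add: bounded_linear_Blinfun_apply[OF bounded_linear_blk])

lemma blk_apply': "blk a b c d p = (a (fst p) + b (snd p), c (fst p) + d (snd p))"
  by (cases p) simp

lemma inl_L_apply [simp]: "(inl_L :: 'a::complex_hilbert \<Rightarrow>\<^sub>L _) x = (x, 0)"
proof -
  have "bounded_linear (\<lambda>x::'a. (x, 0::'a))"
    by (intro bounded_linear_Pair bounded_linear_ident bounded_linear_zero)
  then show ?thesis unfolding inl_L_def by (simp add: bounded_linear_Blinfun_apply)
qed

lemma inr_L_apply [simp]: "(inr_L :: 'a::complex_hilbert \<Rightarrow>\<^sub>L _) y = (0, y)"
proof -
  have "bounded_linear (\<lambda>y::'a. (0::'a, y))"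
    by (intro bounded_linear_Pair bounded_linear_ident bounded_linear_zero)
  then show ?thesis unfolding inr_L_def by (simp add: bounded_linear_Blinfun_apply)
qed

lemma blk_components [simp]:
  "blk11 (blk a b c d) = a" "blk12 (blk a b c d) = b"
  "blk21 (blk a b c d) = c" "blk22 (blk a b c d) = d"
  by (auto intro!: blinfun_eqI simp: blk11_def blk12_def blk21_def blk22_def)

lemma blk_blocks: "blk (blk11 T) (blk12 T) (blk21 T) (blk22 T) = T"
proof (rule blinfun_eqI)
  fix p :: "'a::complex_hilbert \<times> 'a"
  obtain x y where p: "p = (x, y)" by (cases p)
  have "T (x, y) = T (x, 0) + T (0, y)"
    by (metis add.right_neutral add_0 blinfun.add_right add_Pair)
  then show "blk (blk11 T) (blk12 T) (blk21 T) (blk22 T) p = T p"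
    by (simp add: p blk11_def blk12_def blk21_def blk22_def prod_eq_iff)
qed

lemma blk_eq_iff: "blk a b c d = blk a' b' c' d' \<longleftrightarrow> a = a' \<and> b = b' \<and> c = c' \<and> d = d'"
  by (metis blk_components)

lemma blk_compose:
  "blk a b c d o\<^sub>L blk a' b' c' d' =
   blk ((a o\<^sub>L a') + (b o\<^sub>L c')) ((a o\<^sub>L b') + (b o\<^sub>L d'))
       ((c o\<^sub>L a') + (d o\<^sub>L c')) ((c o\<^sub>L b') + (d o\<^sub>L d'))"
  by (rule blinfun_eqI) (simp add: blk_apply' blinfun.add_left blinfun.add_right algebra_simps)

lemma blk_add: "blk a b c d + blk a' b' c' d' = blk (a + a') (b + b') (c + c') (d + d')"
  by (rule blinfun_eqI) (simp add: blk_apply' blinfun.add_left algebra_simps)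

lemma blk_scaleR: "r *\<^sub>R blk a b c d = blk (r *\<^sub>R a) (r *\<^sub>R b) (r *\<^sub>R c) (r *\<^sub>R d)"
  by (rule blinfun_eqI) (simp add: blk_apply' blinfun.scaleR_left scaleR_add_right)

lemma blk_id: "(id_blinfun :: ('a::complex_hilbert \<times> 'a) \<Rightarrow>\<^sub>L _) = blk id_blinfun 0 0 id_blinfun"
  by (rule blinfun_eqI) (simp add: blk_apply')

lemma blk_cscaleL: "(cscaleL c :: ('a::complex_hilbert \<times> 'a) \<Rightarrow>\<^sub>L _) = blk (cscaleL c) 0 0 (cscaleL c)"
  by (rule blinfun_eqI) (simp add: blk_apply' scaleC_prod_def)

lemma cop_blk:
  assumes "is_cop a" "is_cop b" "is_cop c" "is_cop d"
  shows "is_cop (blk a b c d)"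
  using assms by (simp add: is_cop_def blk_apply' scaleC_prod_def scaleC_add_right)

lemma cop_blocks:
  assumes "is_cop T"
  shows "is_cop (blk11 T)" "is_cop (blk12 T)" "is_cop (blk21 T)" "is_cop (blk22 T)"
proof -
  have "T (scaleC c x, scaleC c y) = (scaleC c (fst (T (x, y))), scaleC c (snd (T (x, y))))" for c x y
    using assms unfolding is_cop_def by (metis scaleC_prod_def fst_conv snd_conv)
  from this[of _ _ 0] this[of _ 0] show
    "is_cop (blk11 T)" "is_cop (blk12 T)" "is_cop (blk21 T)" "is_cop (blk22 T)"
    by (simp_all add: is_cop_def blk11_def blk12_def blk21_def blk22_def)
qed

lemma adj_blk:
  assumes "is_cop a" "is_cop b" "is_cop c" "is_cop d"
  shows "adj (blk a b c d) = blk (adj a) (adj c) (adj b) (adj d)"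
proof (rule adj_unique[OF cop_blk[OF assms]])
  fix p q :: "'a \<times> 'a"
  show "inner (blk a b c d p) q = inner p (blk (adj a) (adj c) (adj b) (adj d) q)"
    by (cases p, cases q) (simp add: inner_add_left inner_add_right adj_inner assms)
qed

lemma invertible_blk_diag:
  fixes p q :: "'a::complex_hilbert \<Rightarrow>\<^sub>L 'a"
  assumes "invertible_op p" "invertible_op q"
  shows "invertible_op (blk p 0 0 q)"
  by (rule invertibleI[of "blk (inv_op p) 0 0 (inv_op q)"])
     (simp_all add: blk_compose inv_op_compose_left inv_op_compose_right assms blk_id[symmetric])

section \<open>\<open>J\<close>-unitary operators\<close>

lemma Jop_square: "(Jop :: ('a::complex_hilbert \<times> 'a) \<Rightarrow>\<^sub>L _) o\<^sub>L Jop = id_blinfun"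
  by (simp add: Jop_def blk_compose blk_id)

lemma J_unitary_J_adj:
  assumes JU: "J_unitary T"
  shows "T o\<^sub>L Jop o\<^sub>L adj T = Jop"
proof -
  have iT: "invertible_op T" and hJ: "adj T o\<^sub>L Jop o\<^sub>L T = Jop"
    using JU by (auto simp: J_unitary_def)
  define L where "L = Jop o\<^sub>L adj T o\<^sub>L Jop"
  have "L o\<^sub>L T = id_blinfun"
    using hJ by (simp add: L_def comp_assoc Jop_square)
  then have "L = inv_op T"
    using inv_op_compose_right[OF iT] by (metis comp_assoc comp_id_left comp_id_right)
  then have "T o\<^sub>L L = id_blinfun"
    by (simp add: inv_op_compose_right[OF iT])
  then have "(T o\<^sub>L L) o\<^sub>L Jop = Jop" by simp
  then show ?thesis
    by (simp add: L_def comp_assoc Jop_square)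
qed

lemma J_unitary_block_eqs:
  fixes T :: "('h::complex_hilbert \<times> 'h) \<Rightarrow>\<^sub>L ('h \<times> 'h)"
  assumes JU: "J_unitary T"
  defines "a \<equiv> blk11 T" and "b \<equiv> blk12 T" and "c \<equiv> blk21 T" and "d \<equiv> blk22 T"
  shows "adj a o\<^sub>L a = id_blinfun + (adj c o\<^sub>L c)"
    and "adj d o\<^sub>L d = id_blinfun + (adj b o\<^sub>L b)"
    and "a o\<^sub>L adj a = id_blinfun + (b o\<^sub>L adj b)"
    and "d o\<^sub>L adj d = id_blinfun + (c o\<^sub>L adj c)"
    and "a o\<^sub>L adj c = b o\<^sub>L adj d"
proof -
  have cT: "is_cop T" using JU by (simp add: J_unitary_def)
  have cops: "is_cop a" "is_cop b" "is_cop c" "is_cop d"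
    using cop_blocks[OF cT] by (simp_all add: a_def b_def c_def d_def)
  have T: "T = blk a b c d" by (simp add: a_def b_def c_def d_def blk_blocks)
  have adjT: "adj T = blk (adj a) (adj c) (adj b) (adj d)"
    by (simp add: T adj_blk cops)
  have "adj T o\<^sub>L Jop o\<^sub>L T = Jop"
    using JU by (simp add: J_unitary_def)
  then have E1: "blk ((adj a o\<^sub>L a) - (adj c o\<^sub>L c)) ((adj a o\<^sub>L b) - (adj c o\<^sub>L d))
      ((adj b o\<^sub>L a) - (adj d o\<^sub>L c)) ((adj b o\<^sub>L b) - (adj d o\<^sub>L d)) = blk id_blinfun 0 0 (- id_blinfun)"
    by (simp add: adjT T[symmetric] Jop_def) (simp add: T blk_compose)
  have "T o\<^sub>L Jop o\<^sub>L adj T = Jop"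
    by (rule J_unitary_J_adj[OF JU])
  then have E2: "blk ((a o\<^sub>L adj a) - (b o\<^sub>L adj b)) ((a o\<^sub>L adj c) - (b o\<^sub>L adj d))
      ((c o\<^sub>L adj a) - (d o\<^sub>L adj b)) ((c o\<^sub>L adj c) - (d o\<^sub>L adj d)) = blk id_blinfun 0 0 (- id_blinfun)"
    by (simp add: adjT T[symmetric] Jop_def) (simp add: T blk_compose)
  show "adj a o\<^sub>L a = id_blinfun + (adj c o\<^sub>L c)" "adj d o\<^sub>L d = id_blinfun + (adj b o\<^sub>L b)"
    using E1 by (simp_all add: blk_eq_iff algebra_simps)
  show "a o\<^sub>L adj a = id_blinfun + (b o\<^sub>L adj b)" "d o\<^sub>L adj d = id_blinfun + (c o\<^sub>L adj c)"
    "a o\<^sub>L adj c = b o\<^sub>L adj d"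
    using E2 by (simp_all add: blk_eq_iff algebra_simps)
qed

lemma J_unitary_cop_blocks:
  assumes "J_unitary T"
  shows "is_cop (blk11 T)" "is_cop (blk12 T)" "is_cop (blk21 T)" "is_cop (blk22 T)"
  using assms cop_blocks by (auto simp: J_unitary_def)

lemma J_unitary_invertible_blocks:
  assumes JU: "J_unitary T"
  shows "invertible_op (blk11 T)" "invertible_op (blk22 T)"
  using invertible_if_adj_compose_eqs J_unitary_cop_blocks[OF JU] J_unitary_block_eqs[OF JU]
  by blast+

lemma J_unitary_adj_c_adj_inv_d:
  assumes JU: "J_unitary T"
  defines "a \<equiv> blk11 T" and "b \<equiv> blk12 T" and "c \<equiv> blk21 T" and "d \<equiv> blk22 T"
  shows "adj c o\<^sub>L adj (inv_op d) = inv_op a o\<^sub>L b"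
proof -
  have ia: "invertible_op a" and id: "invertible_op d"
    using J_unitary_invertible_blocks[OF JU] by (simp_all add: a_def d_def)
  have iad: "invertible_op (adj d)"
    using invertible_adj[OF id] J_unitary_cop_blocks[OF JU] by (simp add: d_def)
  have "adj c = inv_op a o\<^sub>L (a o\<^sub>L adj c)"
    by (simp add: comp_assoc[symmetric] inv_op_compose_left[OF ia])
  also have "\<dots> = inv_op a o\<^sub>L b o\<^sub>L adj d"
    using J_unitary_block_eqs(5)[OF JU] by (simp add: a_def b_def c_def d_def comp_assoc)
  finally have "adj c o\<^sub>L inv_op (adj d) = inv_op a o\<^sub>L b o\<^sub>L (adj d o\<^sub>L inv_op (adj d))"
    by (simp add: comp_assoc)
  then have "adj c o\<^sub>L inv_op (adj d) = inv_op a o\<^sub>L b"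
    by (simp add: comp_assoc inv_op_compose_right[OF iad])
  then show ?thesis
    using inv_op_adj[OF id] J_unitary_cop_blocks[OF JU] by (simp add: d_def)
qed

section \<open>The operator \<open>Q\<^sub>z(T)\<close>\<close>

lemma Vop_cscaleL_compose:
  fixes T :: "('h::complex_hilbert \<times> 'h) \<Rightarrow>\<^sub>L ('h \<times> 'h)"
  assumes cT: "is_cop T" and w: "w \<noteq> 0"
    and ia: "invertible_op (blk11 T)" and id: "invertible_op (blk22 T)"
  defines "a \<equiv> blk11 T" and "b \<equiv> blk12 T" and "c \<equiv> blk21 T" and "d \<equiv> blk22 T"
  shows "Vop (cscaleL w o\<^sub>L T) = blk (cscaleL (inverse (cnj w)) o\<^sub>L inv_op (adj a)) (b o\<^sub>L inv_op d)
           (- (inv_op d o\<^sub>L c)) (cscaleL (inverse w) o\<^sub>L inv_op d)"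
proof -
  have cops: "is_cop a" "is_cop b" "is_cop c" "is_cop d"
    using cop_blocks[OF cT] by (simp_all add: a_def b_def c_def d_def)
  have cD: "is_cop (inv_op d)"
    using cop_inv_op[OF id] cops by (simp add: d_def)
  have "cscaleL w o\<^sub>L T = cscaleL w o\<^sub>L blk a b c d"
    by (simp add: a_def b_def c_def d_def blk_blocks)
  also have "\<dots> = blk (cscaleL w o\<^sub>L a) (cscaleL w o\<^sub>L b) (cscaleL w o\<^sub>L c) (cscaleL w o\<^sub>L d)"
    by (simp add: blk_cscaleL blk_compose)
  finally have wT: "cscaleL w o\<^sub>L T = \<dots>" .
  have "inv_op (adj (cscaleL w o\<^sub>L a)) = inv_op (adj a o\<^sub>L cscaleL (cnj w))"
    by (simp add: adj_compose cops adj_cscaleL)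
  also have "\<dots> = cscaleL (inverse (cnj w)) o\<^sub>L inv_op (adj a)"
    using ia w cops
    by (simp add: a_def inv_op_compose invertible_adj invertible_cscaleL inv_op_cscaleL)
  finally have inv_a: "inv_op (adj (cscaleL w o\<^sub>L a)) = \<dots>" .
  have inv_d: "inv_op (cscaleL w o\<^sub>L d) = cscaleL (inverse w) o\<^sub>L inv_op d"
    using id w cD
    by (simp add: d_def inv_op_compose invertible_cscaleL inv_op_cscaleL cscaleL_commute)
  show ?thesis
    unfolding Vop_def wT blk_components inv_a inv_d blk_eq_iff
    using w by (auto intro!: blinfun_eqI simp: cop_scaleC cops cD scaleC_scaleC blinfun.minus_left)
qed

lemma has_vector_derivative_blk_rotation:
  fixes A B C D :: "'a::complex_hilbert \<Rightarrow>\<^sub>L 'a"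
  shows "((\<lambda>t. blk (cscaleL (cis (- t)) o\<^sub>L A) B C (cscaleL (cis t) o\<^sub>L D)) has_vector_derivative
           blk (cscaleL (- \<i> * cis (- s)) o\<^sub>L A) 0 0 (cscaleL (\<i> * cis s) o\<^sub>L D)) (at s)"
proof -
  define E1 where "E1 = blk A 0 0 D"
  define E2 where "E2 = blk (- (cscaleL \<i> o\<^sub>L A)) 0 0 (cscaleL \<i> o\<^sub>L D)"
  have curve: "blk (cscaleL (cis (- t)) o\<^sub>L A) B C (cscaleL (cis t) o\<^sub>L D)
      = blk 0 B C 0 + cos t *\<^sub>R E1 + sin t *\<^sub>R E2" for t
    unfolding E1_def E2_def blk_add blk_scaleR cscaleL_cis
    by (simp add: comp_add_left comp_diff_left comp_scaleR_left)
  have d1: "((\<lambda>t. cos t *\<^sub>R E1) has_vector_derivative (- sin s) *\<^sub>R E1) (at s)"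
    using has_vector_derivative_scaleR[OF DERIV_cos[of s] has_vector_derivative_const[of E1]] by simp
  have d2: "((\<lambda>t. sin t *\<^sub>R E2) has_vector_derivative cos s *\<^sub>R E2) (at s)"
    using has_vector_derivative_scaleR[OF DERIV_sin[of s] has_vector_derivative_const[of E2]] by simp
  have "((\<lambda>t. blk 0 B C 0 + cos t *\<^sub>R E1 + sin t *\<^sub>R E2)
      has_vector_derivative (0 + (- sin s) *\<^sub>R E1 + cos s *\<^sub>R E2)) (at s)"
    by (intro has_vector_derivative_add has_vector_derivative_const d1 d2)
  moreover have "0 + (- sin s) *\<^sub>R E1 + cos s *\<^sub>R E2
      = blk (cscaleL (- \<i> * cis (- s)) o\<^sub>L A) 0 0 (cscaleL (\<i> * cis s) o\<^sub>L D)"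
    unfolding E1_def E2_def blk_add blk_scaleR blk_eq_iff
    by (auto intro!: blinfun_eqI simp: blinfun.add_left blinfun.minus_left blinfun.scaleR_left
        scaleC_Re_Im[of "- \<i> * cis (- s)"] scaleC_Re_Im[of "- (\<i> * cis (- s))"] scaleC_Re_Im[of "\<i> * cis s"])
  ultimately show ?thesis
    unfolding curve by simp
qed

lemma Qop_eq_blk:
  fixes T :: "('h::complex_hilbert \<times> 'h) \<Rightarrow>\<^sub>L ('h \<times> 'h)"
  assumes JU: "J_unitary T" and z: "cmod z = 1"
  defines "a \<equiv> blk11 T" and "b \<equiv> blk12 T" and "c \<equiv> blk21 T" and "d \<equiv> blk22 T"
    and "A \<equiv> inv_op (adj (blk11 T))" and "D \<equiv> inv_op (blk22 T)"
  shows "Qop z T = blk (- (inv_op a o\<^sub>L A)) (- (cscaleL z o\<^sub>L inv_op a o\<^sub>L b o\<^sub>L D))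
                      (- (cscaleL (cnj z) o\<^sub>L adj D o\<^sub>L adj b o\<^sub>L A)) (adj D o\<^sub>L D)"
proof -
  have cT: "is_cop T" using JU by (simp add: J_unitary_def)
  have cops: "is_cop a" "is_cop b" "is_cop c" "is_cop d"
    using J_unitary_cop_blocks[OF JU] by (simp_all add: a_def b_def c_def d_def)
  have ia: "invertible_op a" and id: "invertible_op d"
    using J_unitary_invertible_blocks[OF JU] by (simp_all add: a_def d_def)
  have cA: "is_cop A" and cD: "is_cop D" and cia: "is_cop (inv_op a)"
    using ia id cops by (simp_all add: A_def D_def a_def d_def cop_inv_op invertible_adj)
  have adjA: "adj A = inv_op a"
    using ia cops by (simp add: A_def a_def adj_inv_op_adj)
  have V: "Vop (cscaleL (cis (- t)) o\<^sub>L T)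
      = blk (cscaleL (cis (- t)) o\<^sub>L A) (b o\<^sub>L D) (- (D o\<^sub>L c)) (cscaleL (cis t) o\<^sub>L D)" for t
    using Vop_cscaleL_compose[OF cT cis_neq_zero J_unitary_invertible_blocks[OF JU]]
    by (simp add: a_def b_def c_def d_def A_def D_def cis_cnj)
  define s where "s = Arg z"
  have zs: "cis s = z"
  proof -
    have "z \<noteq> 0" using z by auto
    then show ?thesis
      using cis_Arg[of z] z by (simp add: s_def sgn_div_norm)
  qed
  have Q: "Qop z T = cscaleL (1 / \<i>) o\<^sub>L
      (adj (blk (cscaleL (cnj z) o\<^sub>L A) (b o\<^sub>L D) (- (D o\<^sub>L c)) (cscaleL z o\<^sub>L D)) o\<^sub>L
       blk (cscaleL (- \<i> * cnj z) o\<^sub>L A) 0 0 (cscaleL (\<i> * z) o\<^sub>L D))"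
    unfolding Qop_def Let_def s_def[symmetric] V
      vector_derivative_at[OF has_vector_derivative_blk_rotation]
    by (simp add: zs[symmetric] cis_cnj)
  \<comment> \<open>the off-diagonal entry \<open>-(D c)\<^sup>* = -c\<^sup>* D\<^sup>*\<close> is where \<open>T J T\<^sup>* = J\<close> enters\<close>
  have adjV: "adj (blk (cscaleL (cnj z) o\<^sub>L A) (b o\<^sub>L D) (- (D o\<^sub>L c)) (cscaleL z o\<^sub>L D))
      = blk (inv_op a o\<^sub>L cscaleL z) (- (inv_op a o\<^sub>L b)) (adj D o\<^sub>L adj b) (adj D o\<^sub>L cscaleL (cnj z))"
  proof -
    have "adj c o\<^sub>L adj D = inv_op a o\<^sub>L b"
      using J_unitary_adj_c_adj_inv_d[OF JU] by (simp add: a_def b_def c_def d_def D_def)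
    then show ?thesis
      by (simp add: adj_blk cops cA cD adj_compose adj_minus adj_cscaleL adjA)
  qed
  have "z * cnj z = 1"
    using z complex_norm_square[of z] by simp
  then have scalars: "\<i> * (z * (\<i> * cnj z)) = -1" "\<i> * (cnj z * (\<i> * z)) = -1"
    by (simp_all add: mult.left_commute mult.commute)
  show ?thesis
    unfolding Q adjV blk_cscaleL
    by (simp add: blk_compose blk_eq_iff, intro conjI blinfun_eqI)
      (simp_all add: cop_scaleC cops cA cD cia scaleC_scaleC scalars blinfun.minus_left
        blinfun.minus_right scaleC_minus_left scaleC_minus_right)
qed

lemma blk_reflection_square:
  fixes b :: "'a::complex_hilbert \<Rightarrow>\<^sub>L 'a"
  assumes cb: "is_cop b" and z: "cmod z = 1"
  defines "N \<equiv> blk (- id_blinfun) (- (cscaleL z o\<^sub>L b)) (- (cscaleL (cnj z) o\<^sub>L adj b)) id_blinfun"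
  shows "N o\<^sub>L N = blk (id_blinfun + (b o\<^sub>L adj b)) 0 0 (id_blinfun + (adj b o\<^sub>L b))"
proof -
  have "z * cnj z = 1" "cnj z * z = 1"
    using z complex_norm_square[of z] by (simp_all add: mult.commute)
  then show ?thesis
    unfolding N_def
    by (auto simp: blk_compose blk_eq_iff intro!: blinfun_eqI
        simp: cb cop_scaleC scaleC_scaleC blinfun.minus_left blinfun.add_left mult.assoc[symmetric])
qed

lemma Qop_factorization:
  fixes T :: "('h::complex_hilbert \<times> 'h) \<Rightarrow>\<^sub>L ('h \<times> 'h)"
  assumes JU: "J_unitary T" and z: "cmod z = 1"
  defines "a \<equiv> blk11 T" and "b \<equiv> blk12 T" and "d \<equiv> blk22 T"
  shows "Qop z T = adj (blk (inv_op (adj a)) 0 0 (inv_op d)) o\<^sub>L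
           blk (- id_blinfun) (- (cscaleL z o\<^sub>L b)) (- (cscaleL (cnj z) o\<^sub>L adj b)) id_blinfun o\<^sub>L
           blk (inv_op (adj a)) 0 0 (inv_op d)"
proof -
  have cops: "is_cop a" "is_cop b" "is_cop d"
    using J_unitary_cop_blocks[OF JU] by (simp_all add: a_def b_def d_def)
  have ia: "invertible_op a" and id: "invertible_op d"
    using J_unitary_invertible_blocks[OF JU] by (simp_all add: a_def d_def)
  have cA: "is_cop (inv_op (adj a))" and cD: "is_cop (inv_op d)" and cia: "is_cop (inv_op a)"
    using ia id cops by (simp_all add: cop_inv_op invertible_adj)
  have "adj (blk (inv_op (adj a)) 0 0 (inv_op d)) = blk (inv_op a) 0 0 (adj (inv_op d))"
    using ia cops cA cD by (simp add: adj_blk adj_inv_op_adj)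
  then show ?thesis
    unfolding Qop_eq_blk[OF JU z] a_def[symmetric] b_def[symmetric] d_def[symmetric]
    by (auto simp: blk_compose blk_eq_iff intro!: blinfun_eqI
        simp: cops cA cD cia cop_scaleC blinfun.minus_left)
qed

lemma Qop_blocks:
  fixes T :: "('h::complex_hilbert \<times> 'h) \<Rightarrow>\<^sub>L ('h \<times> 'h)"
  assumes JU: "J_unitary T" and z: "cmod z = 1"
  defines "a \<equiv> blk11 T" and "b \<equiv> blk12 T" and "d \<equiv> blk22 T"
  shows "Qop z T = blk (- inv_op (adj a o\<^sub>L a))
                      (- (cscaleL z o\<^sub>L inv_op a o\<^sub>L b o\<^sub>L inv_op d))
                      (- adj (cscaleL z o\<^sub>L inv_op a o\<^sub>L b o\<^sub>L inv_op d))
                      (inv_op (d o\<^sub>L adj d))"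
proof -
  have cops: "is_cop a" "is_cop b" "is_cop d"
    using J_unitary_cop_blocks[OF JU] by (simp_all add: a_def b_def d_def)
  have ia: "invertible_op a" and id: "invertible_op d"
    using J_unitary_invertible_blocks[OF JU] by (simp_all add: a_def d_def)
  have cA: "is_cop (inv_op (adj a))" and cD: "is_cop (inv_op d)" and cia: "is_cop (inv_op a)"
    using ia id cops by (simp_all add: cop_inv_op invertible_adj)
  have "inv_op (adj a o\<^sub>L a) = inv_op a o\<^sub>L inv_op (adj a)"
    using ia cops by (simp add: inv_op_compose invertible_adj)
  moreover have "inv_op (d o\<^sub>L adj d) = adj (inv_op d) o\<^sub>L inv_op d"
    using id cops by (simp add: inv_op_compose invertible_adj inv_op_adj)
  moreover have "adj (inv_op a) = inv_op (adj a)"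
    using ia cops by (simp add: inv_op_adj)
  ultimately show ?thesis
    unfolding Qop_eq_blk[OF JU z] a_def[symmetric] b_def[symmetric] d_def[symmetric]
    by (auto simp: blk_eq_iff adj_compose adj_minus adj_cscaleL intro!: blinfun_eqI
        simp: cops cA cD cia cop_scaleC blinfun.minus_left)
qed

lemma invertible_Qop:
  fixes T :: "('h::complex_hilbert \<times> 'h) \<Rightarrow>\<^sub>L ('h \<times> 'h)"
  assumes JU: "J_unitary T" and z: "cmod z = 1"
  shows "invertible_op (Qop z T)"
proof -
  define a b d where "a = blk11 T" and "b = blk12 T" and "d = blk22 T"
  define M where "M = blk (inv_op (adj a)) 0 0 (inv_op d)"
  define N where "N = blk (- id_blinfun) (- (cscaleL z o\<^sub>L b)) (- (cscaleL (cnj z) o\<^sub>L adj b)) id_blinfun"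
  have cops: "is_cop a" "is_cop b" "is_cop d"
    using J_unitary_cop_blocks[OF JU] by (simp_all add: a_def b_def d_def)
  have ia: "invertible_op a" and id: "invertible_op d"
    using J_unitary_invertible_blocks[OF JU] by (simp_all add: a_def d_def)
  have "N o\<^sub>L N = blk (id_blinfun + (b o\<^sub>L adj b)) 0 0 (id_blinfun + (adj b o\<^sub>L b))"
    unfolding N_def by (rule blk_reflection_square[OF cops(2) z])
  also have "\<dots> = blk (a o\<^sub>L adj a) 0 0 (adj d o\<^sub>L d)"
    unfolding a_def b_def d_def by (simp only: J_unitary_block_eqs(2,3)[OF JU])
  finally have "invertible_op (N o\<^sub>L N)"
    using ia id cops by (simp add: invertible_blk_diag invertible_compose invertible_adj)
  then have "invertible_op N"
    by (rule invertible_op_of_square)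
  moreover have "invertible_op M" and "is_cop M"
    using ia id cops
    by (simp_all add: M_def invertible_blk_diag invertible_inv_op invertible_adj cop_blk cop_inv_op)
  ultimately show ?thesis
    using Qop_factorization[OF JU z]
    by (simp add: M_def N_def a_def b_def d_def invertible_compose invertible_adj)
qed

theorem proposition3p23:
  fixes T :: "('h::complex_hilbert \<times> 'h) \<Rightarrow>\<^sub>L ('h \<times> 'h)" and z :: complex
  assumes sep: "separable_space (euclidean :: 'h topology)"
    and JU: "J_unitary T"
    and z: "cmod z = 1"
  defines "a \<equiv> blk11 T" and "b \<equiv> blk12 T" and "c \<equiv> blk21 T" and "d \<equiv> blk22 T"
  shows "(Qop z T =
           adj (blk (inv_op (adj a)) 0 0 (inv_op d)) o\<^sub>L
           blk (- id_blinfun) (- (cscaleL z o\<^sub>L b)) (- (cscaleL (cnj z) o\<^sub>L adj b)) id_blinfun o\<^sub>L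
           blk (inv_op (adj a)) 0 0 (inv_op d))
    \<and> (Qop z T =
           blk (- inv_op (adj a o\<^sub>L a))
               (- (cscaleL z o\<^sub>L inv_op a o\<^sub>L b o\<^sub>L inv_op d))
               (- adj (cscaleL z o\<^sub>L inv_op a o\<^sub>L b o\<^sub>L inv_op d))
               (inv_op (d o\<^sub>L adj d)))
    \<and> 0 \<notin> op_spectrum (Qop z T)"
proof -
  have "cscaleL 0 = (0 :: ('h \<times> 'h) \<Rightarrow>\<^sub>L _)"
    by (rule blinfun_eqI) simp
  then have "0 \<notin> op_spectrum (Qop z T)"
    using invertible_Qop[OF JU z] by (simp add: op_spectrum_def)
  then show ?thesis
    using Qop_factorization[OF JU z] Qop_blocks[OF JU z] by (simp add: a_def b_def d_def)
qed

end
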